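(* Let $X$ be a real Banach space and $X_1=X\setminus B_X$. The following statements are equivalent. (1) $X$ is UR. (2) $\sup_{x,x'\in X_1}\left|r(P_{S_X}(x,\frac1n),P_{S_X}(x',\frac1n))-\left\|\frac{x}{\|x\|}-\frac{x'}{\|x'\|}\right\|\right|\to0$. (3) $\sup_{x\in X_1}\mathrm{diam}(P_{S_X}(x,\frac1n))\to0$. (4) $P_{S_X}(x)=\{\frac{x}{\|x\|}\}$ for every $x\in X_1$ and $\sup_{x\in X_1}H(P_{S_X}(x,\frac1n),P_{S_X}(x))\to0$. (5) $S_X$ is uniformly strongly Chebyshev on $X_1$.
   Context: $B_X,S_X$ are the closed unit ball and unit sphere of $X$. For non-empty closed $A\subseteq X$, $x\in X$, $\delta\ge0$: $P_A(x,\delta)=\{y\in A:\|x-y\|\le\inf_{z\in A}\|x-z\|+\delta\}$, $P_A(x)=P_A(x,0)$. $A$ is uniformly strongly Chebyshev on $D$ if $P_A(x)$ is a singleton for every $x\in D$ and for every $\epsilon>0$ there is $\delta>0$ such that $P_A(x,\delta)\subseteq P_A(x)+\epsilon B_X$ for all $x\in D$. For non-empty bounded $A,B$: $r(A,B)=\sup\{\|a-b\|:a\in A,b\in B\}$, $H(A,B)=\inf\{r>0:A\subseteq B+rB_X,B\subseteq A+rB_X\}$. $X$ is UR if $\|x_n-y_n\|\to0$ whenever $(x_n),(y_n)\subseteq S_X$ with $\|\frac{x_n+y_n}{2}\|\to1$. *)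

theory Defs
  imports "HOL-Analysis.Analysis"
begin

definition unit_ball :: "'a::real_normed_vector set" where
  "unit_ball = cball 0 1"

definition unit_sphere :: "'a::real_normed_vector set" where
  "unit_sphere = sphere 0 1"

definition approx_proj :: "'a::real_normed_vector set \<Rightarrow> 'a \<Rightarrow> real \<Rightarrow> 'a set" where
  "approx_proj A x \<delta> = {y \<in> A. norm (x - y) \<le> (INF z\<in>A. norm (x - z)) + \<delta>}"

definition metric_proj :: "'a::real_normed_vector set \<Rightarrow> 'a \<Rightarrow> 'a set" where
  "metric_proj A x = approx_proj A x 0"

definition uniformly_strongly_chebyshev :: "'a::real_normed_vector set \<Rightarrow> 'a set \<Rightarrow> bool" where
  "uniformly_strongly_chebyshev A D \<longleftrightarrow>
     (\<forall>x\<in>D. \<exists>p. metric_proj A x = {p}) \<and>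
     (\<forall>\<epsilon>>0. \<exists>\<delta>>0. \<forall>x\<in>D.
        approx_proj A x \<delta> \<subseteq> {p + \<epsilon> *\<^sub>R u | p u. p \<in> metric_proj A x \<and> u \<in> unit_ball})"

definition rad :: "'a::real_normed_vector set \<Rightarrow> 'a set \<Rightarrow> real" where
  "rad A B = (SUP (a, b)\<in>A \<times> B. norm (a - b))"

definition hausdorff :: "'a::real_normed_vector set \<Rightarrow> 'a set \<Rightarrow> real" where
  "hausdorff A B = Inf {r. r > 0 \<and>
      A \<subseteq> {b + r *\<^sub>R u | b u. b \<in> B \<and> u \<in> unit_ball} \<and>
      B \<subseteq> {a + r *\<^sub>R u | a u. a \<in> A \<and> u \<in> unit_ball}}"

definition uniformly_rotund :: "'a::real_normed_vector itself \<Rightarrow> bool" where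
  "uniformly_rotund (_::'a itself) \<longleftrightarrow>
     (\<forall>x y :: nat \<Rightarrow> 'a. (\<forall>n. x n \<in> unit_sphere \<and> y n \<in> unit_sphere) \<longrightarrow>
        (\<lambda>n. norm ((x n + y n) /\<^sub>R 2)) \<longlonglongrightarrow> 1 \<longrightarrow>
        (\<lambda>n. norm (x n - y n)) \<longlonglongrightarrow> 0)"

end

theory Submission
  imports Defs
begin

text \<open>
  For \<open>\<parallel>x\<parallel> \<ge> 1\<close> the distance from \<open>x\<close> to the unit sphere is \<open>\<parallel>x\<parallel> - 1\<close>, attained at
  \<open>u = x /\<^sub>R \<parallel>x\<parallel>\<close>, so a unit vector \<open>y\<close> is a \<open>\<delta>\<close>-approximate nearest point of \<open>x\<close> iff
  \<open>\<parallel>x - y\<parallel> \<le> \<parallel>x\<parallel> - 1 + \<delta>\<close>. Such a \<open>y\<close> satisfies \<open>\<parallel>u + y\<parallel> \<ge> 2 - \<delta>\<close>; conversely, two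
  unit vectors \<open>y, z\<close> with \<open>\<parallel>y + z\<parallel> \<ge> 2 - \<delta>\<close> are both \<open>\<delta>\<close>-approximate nearest points of
  \<open>y + z\<close>. Hence uniform rotundity says exactly that the sets \<open>P(x, \<delta>)\<close> shrink to \<open>u\<close>
  uniformly in \<open>x\<close>, which is uniform strong Chebyshevness, and also exactly that their
  diameters tend to \<open>0\<close> uniformly. The Hausdorff distance from \<open>P(x, \<delta>)\<close> to \<open>{u}\<close> is the
  radius of \<open>P(x, \<delta>)\<close> around \<open>u\<close>, the deviation of \<open>r(P(x, \<delta>), P(x', \<delta>))\<close> from
  \<open>\<parallel>u - u'\<parallel>\<close> is at most twice the larger radius, and at \<open>x = x'\<close> that deviation is
  the diameter.
\<close>

lemma mem_unit_sphere_iff [simp]: "x \<in> unit_sphere \<longleftrightarrow> norm x = 1"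
  by (simp add: unit_sphere_def)

lemma mem_unit_ball_iff: "x \<in> unit_ball \<longleftrightarrow> norm x \<le> 1"
  by (simp add: unit_ball_def)

lemma not_mem_unit_ball_iff [simp]: "x \<notin> unit_ball \<longleftrightarrow> 1 < norm x"
  by (simp add: unit_ball_def not_le)

lemma outside_unit_ball_nonempty:
  assumes "\<exists>x::'a::real_normed_vector. x \<noteq> 0"
  shows "UNIV - unit_ball \<noteq> ({} :: 'a set)"
proof -
  obtain v :: 'a where "v \<noteq> 0" using assms by blast
  then have "(2 / norm v) *\<^sub>R v \<in> UNIV - unit_ball" by simp
  then show ?thesis by blast
qed

lemma approx_proj_subset: "approx_proj A x \<delta> \<subseteq> A"
  by (auto simp: approx_proj_def)

lemma approx_proj_mono: "\<delta> \<le> \<delta>' \<Longrightarrow> approx_proj A x \<delta> \<subseteq> approx_proj A x \<delta>'"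
  by (auto simp: approx_proj_def)

lemma bounded_approx_proj_unit_sphere: "bounded (approx_proj unit_sphere x \<delta>)"
  unfolding unit_sphere_def
  by (rule bounded_subset[OF bounded_subset[OF bounded_cball sphere_cball] approx_proj_subset])

lemma norm_diff_radial:
  fixes x :: "'a::real_normed_vector"
  assumes "1 \<le> norm x"
  shows "norm (x - x /\<^sub>R norm x) = norm x - 1"
proof -
  have "x \<noteq> 0" using assms by auto
  have "x - x /\<^sub>R norm x = (1 - inverse (norm x)) *\<^sub>R x"
    by (simp add: scaleR_diff_left)
  then have "norm (x - x /\<^sub>R norm x) = \<bar>1 - inverse (norm x)\<bar> * norm x"
    by simp
  also have "\<dots> = (1 - inverse (norm x)) * norm x"
    using assms \<open>x \<noteq> 0\<close> by (simp add: inverse_le_1_iff)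
  also have "\<dots> = norm x - 1"
    using \<open>x \<noteq> 0\<close> by (simp add: field_simps)
  finally show ?thesis .
qed

lemma INF_norm_diff_unit_sphere:
  fixes x :: "'a::real_normed_vector"
  assumes "1 \<le> norm x"
  shows "(INF z\<in>unit_sphere. norm (x - z)) = norm x - 1"
proof (rule cInf_eq_minimum)
  have "x \<noteq> 0" using assms by auto
  then show "norm x - 1 \<in> (\<lambda>z. norm (x - z)) ` unit_sphere"
    using norm_diff_radial[OF assms] by (intro image_eqI[of _ _ "x /\<^sub>R norm x"]) auto
  show "norm x - 1 \<le> d" if "d \<in> (\<lambda>z. norm (x - z)) ` unit_sphere" for d
  proof -
    from that obtain z where "norm z = 1" "d = norm (x - z)" by auto
    then show ?thesis using norm_triangle_ineq2[of x z] by simp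
  qed
qed

lemma approx_proj_unit_sphere_iff:
  fixes x :: "'a::real_normed_vector"
  assumes "1 \<le> norm x"
  shows "y \<in> approx_proj unit_sphere x \<delta> \<longleftrightarrow> norm y = 1 \<and> norm (x - y) \<le> norm x - 1 + \<delta>"
  using INF_norm_diff_unit_sphere[OF assms] by (simp add: approx_proj_def)

lemma radial_mem_approx_proj_unit_sphere:
  fixes x :: "'a::real_normed_vector"
  assumes "1 \<le> norm x" "0 \<le> \<delta>"
  shows "x /\<^sub>R norm x \<in> approx_proj unit_sphere x \<delta>"
proof -
  have "x \<noteq> 0" using assms by auto
  then show ?thesis
    using assms norm_diff_radial[OF assms(1)] by (simp add: approx_proj_unit_sphere_iff)
qed

lemma radial_mem_metric_proj_unit_sphere:
  fixes x :: "'a::real_normed_vector"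
  shows "1 \<le> norm x \<Longrightarrow> x /\<^sub>R norm x \<in> metric_proj unit_sphere x"
  unfolding metric_proj_def by (rule radial_mem_approx_proj_unit_sphere) simp_all

lemma norm_add_radial_ge:
  fixes x :: "'a::real_normed_vector"
  assumes "1 \<le> norm x" "y \<in> approx_proj unit_sphere x \<delta>"
  shows "2 - \<delta> \<le> norm (x /\<^sub>R norm x + y)"
proof -
  have y: "norm y = 1" "norm (x - y) \<le> norm x - 1 + \<delta>"
    using assms by (simp_all add: approx_proj_unit_sphere_iff)
  define u where "u = x /\<^sub>R norm x"
  have "x \<noteq> 0" using assms by auto
  then have "norm u = 1" "norm x *\<^sub>R u = x" by (simp_all add: u_def)
  then have "u + y = (1 + norm x) *\<^sub>R u - (x - y)"
    by (simp add: scaleR_add_left)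
  moreover have "norm ((1 + norm x) *\<^sub>R u) = 1 + norm x"
    using \<open>norm u = 1\<close> by simp
  ultimately have "1 + norm x - norm (x - y) \<le> norm (u + y)"
    by (metis norm_triangle_ineq2)
  with y show ?thesis by (simp add: u_def)
qed

lemma mem_approx_proj_unit_sphere_add:
  fixes x y :: "'a::real_normed_vector"
  assumes "norm x = 1" "norm y = 1" "1 \<le> norm (x + y)" "2 - \<delta> \<le> norm (x + y)"
  shows "x \<in> approx_proj unit_sphere (x + y) \<delta>"
  using assms by (simp add: approx_proj_unit_sphere_iff)

lemma thickening_eq_UN_cball:
  fixes B :: "'a::real_normed_vector set"
  assumes "0 < r"
  shows "{b + r *\<^sub>R u | b u. b \<in> B \<and> u \<in> unit_ball} = (\<Union>b\<in>B. cball b r)"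
proof (intro equalityI subsetI)
  fix y assume "y \<in> {b + r *\<^sub>R u | b u. b \<in> B \<and> u \<in> unit_ball}"
  then obtain b u where "b \<in> B" "norm u \<le> 1" "y = b + r *\<^sub>R u"
    by (auto simp: mem_unit_ball_iff)
  then have "dist b y \<le> r" using assms by (simp add: dist_norm mult_left_le)
  with \<open>b \<in> B\<close> show "y \<in> (\<Union>b\<in>B. cball b r)" by auto
next
  fix y assume "y \<in> (\<Union>b\<in>B. cball b r)"
  then obtain b where "b \<in> B" and "dist b y \<le> r" by auto
  then have "norm (y - b) \<le> r" by (simp add: dist_norm norm_minus_commute)
  then have "(y - b) /\<^sub>R r \<in> unit_ball"
    unfolding mem_unit_ball_iff norm_scaleR using assms by (simp add: field_simps)
  with \<open>b \<in> B\<close> have "b + r *\<^sub>R ((y - b) /\<^sub>R r) \<in> {b + r *\<^sub>R u | b u. b \<in> B \<and> u \<in> unit_ball}"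
    by blast
  moreover have "b + r *\<^sub>R ((y - b) /\<^sub>R r) = y" using assms by simp
  ultimately show "y \<in> {b + r *\<^sub>R u | b u. b \<in> B \<and> u \<in> unit_ball}" by (simp only:)
qed

lemma bdd_above_dist_image:
  fixes A :: "'a::real_normed_vector set"
  assumes "bounded A"
  shows "bdd_above (dist u ` A)"
proof -
  obtain M where M: "\<forall>a\<in>A. norm a \<le> M" using assms by (auto simp: bounded_iff)
  have "dist u a \<le> norm u + M" if "a \<in> A" for a
  proof -
    have "dist u a \<le> norm u + norm a" by (simp add: dist_norm norm_triangle_ineq4)
    also have "\<dots> \<le> norm u + M" using M that by simp
    finally show ?thesis .
  qed
  then show ?thesis by (rule bdd_aboveI2)
qed

lemma Inf_pos_atLeast:
  fixes s :: real
  assumes "0 \<le> s"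
  shows "Inf {r. 0 < r \<and> s \<le> r} = s"
proof (rule cInf_eq_non_empty)
  have "s + 1 \<in> {r. 0 < r \<and> s \<le> r}" using assms by simp
  then show "{r. 0 < r \<and> s \<le> r} \<noteq> {}" by blast
  show "y \<le> s" if lower: "\<And>r. r \<in> {r. 0 < r \<and> s \<le> r} \<Longrightarrow> y \<le> r" for y
  proof (rule field_le_epsilon)
    fix e :: real assume "0 < e"
    with assms show "y \<le> s + e" by (intro lower) simp
  qed
qed simp

lemma hausdorff_singleton:
  fixes A :: "'a::real_normed_vector set"
  assumes "A \<noteq> {}" "bounded A"
  shows "hausdorff A {u} = (SUP a\<in>A. dist u a)"
proof -
  let ?s = "SUP a\<in>A. dist u a"
  have bdd: "bdd_above (dist u ` A)"
    using assms(2) by (rule bdd_above_dist_image)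
  obtain a0 where "a0 \<in> A" using assms(1) by blast
  have "dist u a0 \<le> ?s" using cSUP_upper[OF \<open>a0 \<in> A\<close> bdd] .
  then have "0 \<le> ?s" using zero_le_dist order_trans by blast
  have A_sub_iff: "A \<subseteq> (\<Union>b\<in>{u}. cball b r) \<longleftrightarrow> ?s \<le> r" for r
    unfolding cSUP_le_iff[OF assms(1) bdd] by (simp add: subset_iff Ball_def)
  have u_mem: "{u} \<subseteq> (\<Union>a\<in>A. cball a r)" if "?s \<le> r" for r
  proof -
    have "dist a0 u \<le> r" using \<open>dist u a0 \<le> ?s\<close> that by (simp add: dist_commute)
    with \<open>a0 \<in> A\<close> show ?thesis by auto
  qed
  have "{r. 0 < r \<and> A \<subseteq> {b + r *\<^sub>R v | b v. b \<in> {u} \<and> v \<in> unit_ball} \<and>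
             {u} \<subseteq> {a + r *\<^sub>R v | a v. a \<in> A \<and> v \<in> unit_ball}} = {r. 0 < r \<and> ?s \<le> r}"
  proof (rule Collect_cong)
    fix r
    show "0 < r \<and> A \<subseteq> {b + r *\<^sub>R v | b v. b \<in> {u} \<and> v \<in> unit_ball} \<and>
            {u} \<subseteq> {a + r *\<^sub>R v | a v. a \<in> A \<and> v \<in> unit_ball} \<longleftrightarrow> 0 < r \<and> ?s \<le> r"
    proof (cases "0 < r")
      case True
      show ?thesis unfolding thickening_eq_UN_cball[OF True] A_sub_iff using u_mem by blast
    qed simp
  qed
  then have "hausdorff A {u} = Inf {r. 0 < r \<and> ?s \<le> r}"
    unfolding hausdorff_def by (rule arg_cong)
  also have "\<dots> = ?s" using \<open>0 \<le> ?s\<close> by (rule Inf_pos_atLeast)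
  finally show ?thesis .
qed

lemma hausdorff_approx_proj_unit_sphere:
  fixes x :: "'a::real_normed_vector"
  assumes "1 \<le> norm x" "0 \<le> \<delta>"
  shows "0 \<le> hausdorff (approx_proj unit_sphere x \<delta>) {x /\<^sub>R norm x}"
    and "hausdorff (approx_proj unit_sphere x \<delta>) {x /\<^sub>R norm x} \<le> e \<longleftrightarrow>
           approx_proj unit_sphere x \<delta> \<subseteq> cball (x /\<^sub>R norm x) e"
proof -
  define A u where "A = approx_proj unit_sphere x \<delta>" and "u = x /\<^sub>R norm x"
  have "u \<in> A" unfolding A_def u_def using assms by (rule radial_mem_approx_proj_unit_sphere)
  then have "A \<noteq> {}" by blast
  have bdd: "bdd_above (dist u ` A)"
    unfolding A_def by (rule bdd_above_dist_image[OF bounded_approx_proj_unit_sphere])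
  have eq: "hausdorff A {u} = (SUP y\<in>A. dist u y)"
    unfolding A_def by (rule hausdorff_singleton[OF \<open>A \<noteq> {}\<close>[unfolded A_def] bounded_approx_proj_unit_sphere])
  have "dist u u \<le> (SUP y\<in>A. dist u y)"
    by (rule cSUP_upper[OF \<open>u \<in> A\<close> bdd])
  then show "0 \<le> hausdorff (approx_proj unit_sphere x \<delta>) {x /\<^sub>R norm x}"
    by (simp add: eq flip: A_def u_def)
  show "hausdorff (approx_proj unit_sphere x \<delta>) {x /\<^sub>R norm x} \<le> e \<longleftrightarrow>
          approx_proj unit_sphere x \<delta> \<subseteq> cball (x /\<^sub>R norm x) e"
    unfolding A_def[symmetric] u_def[symmetric] eq cSUP_le_iff[OF \<open>A \<noteq> {}\<close> bdd]
    by (simp add: subset_iff Ball_def)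
qed

lemma diameter_eq_rad: "A \<noteq> {} \<Longrightarrow> diameter A = rad A A"
  by (simp add: diameter_def rad_def dist_norm[abs_def])

lemma norm_diff_le_rad:
  fixes A B :: "'a::real_normed_vector set"
  assumes "bounded A" "bounded B" "a \<in> A" "b \<in> B"
  shows "norm (a - b) \<le> rad A B"
proof -
  obtain M N where "\<forall>a\<in>A. norm a \<le> M" "\<forall>b\<in>B. norm b \<le> N"
    using assms(1,2) by (auto simp: bounded_iff)
  then have "norm (a - b) \<le> M + N" if "a \<in> A" "b \<in> B" for a b
    using that norm_triangle_ineq4[of a b] by fastforce
  then have "bdd_above ((\<lambda>(a, b). norm (a - b)) ` (A \<times> B))"
    by (intro bdd_aboveI2[where M = "M + N"]) auto
  then show ?thesis
    unfolding rad_def by (rule cSUP_upper2[of _ _ "(a, b)"]) (use assms(3,4) in auto)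
qed

lemma rad_le:
  assumes "A \<noteq> {}" "B \<noteq> {}" "\<And>a b. a \<in> A \<Longrightarrow> b \<in> B \<Longrightarrow> norm (a - b) \<le> c"
  shows "rad A B \<le> c"
  unfolding rad_def using assms by (auto intro!: cSUP_least)

lemma tendsto_SUP_0_iff_uniformly:
  fixes f :: "'i \<Rightarrow> 'b \<Rightarrow> real"
  assumes "X \<noteq> {}" and nonneg: "\<And>i x. x \<in> X \<Longrightarrow> 0 \<le> f i x"
    and bound: "\<And>i x. x \<in> X \<Longrightarrow> f i x \<le> B"
  shows "((\<lambda>i. SUP x\<in>X. f i x) \<longlongrightarrow> 0) F \<longleftrightarrow> (\<forall>e>0. \<forall>\<^sub>F i in F. \<forall>x\<in>X. f i x \<le> e)"
proof -
  have bdd: "bdd_above (f i ` X)" for i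
    using bound by (rule bdd_aboveI2)
  have SUP_nonneg: "0 \<le> (SUP x\<in>X. f i x)" for i
    using \<open>X \<noteq> {}\<close> cSUP_upper2[OF bdd _ nonneg] by blast
  have SUP_le_iff: "(SUP x\<in>X. f i x) \<le> e \<longleftrightarrow> (\<forall>x\<in>X. f i x \<le> e)" for i e
    using cSUP_le_iff[OF \<open>X \<noteq> {}\<close> bdd] .
  show ?thesis
  proof
    assume lim: "((\<lambda>i. SUP x\<in>X. f i x) \<longlongrightarrow> 0) F"
    show "\<forall>e>0. \<forall>\<^sub>F i in F. \<forall>x\<in>X. f i x \<le> e"
    proof (intro allI impI)
      fix e :: real assume "0 < e"
      with lim have "\<forall>\<^sub>F i in F. (SUP x\<in>X. f i x) < e" by (rule order_tendstoD(2))
      then show "\<forall>\<^sub>F i in F. \<forall>x\<in>X. f i x \<le> e"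
        by (rule eventually_mono) (simp flip: SUP_le_iff)
    qed
  next
    assume uniform: "\<forall>e>0. \<forall>\<^sub>F i in F. \<forall>x\<in>X. f i x \<le> e"
    show "((\<lambda>i. SUP x\<in>X. f i x) \<longlongrightarrow> 0) F"
    proof (rule order_tendstoI)
      fix a :: real assume "a < 0"
      show "\<forall>\<^sub>F i in F. a < (SUP x\<in>X. f i x)"
      proof (rule always_eventually, rule allI)
        fix i show "a < (SUP x\<in>X. f i x)" using \<open>a < 0\<close> SUP_nonneg[of i] by linarith
      qed
    next
      fix e :: real assume "0 < e"
      then have "\<forall>\<^sub>F i in F. \<forall>x\<in>X. f i x \<le> e / 2"
        using uniform half_gt_zero by blast
      then show "\<forall>\<^sub>F i in F. (SUP x\<in>X. f i x) < e"
      proof (rule eventually_mono)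
        fix i assume "\<forall>x\<in>X. f i x \<le> e / 2"
        then have "(SUP x\<in>X. f i x) \<le> e / 2" using SUP_le_iff by blast
        with \<open>0 < e\<close> show "(SUP x\<in>X. f i x) < e" by linarith
      qed
    qed
  qed
qed

lemma uniformly_rotundD:
  fixes x y :: "nat \<Rightarrow> 'a::real_normed_vector"
  assumes "uniformly_rotund TYPE('a)" "\<And>n. norm (x n) = 1" "\<And>n. norm (y n) = 1"
    and "(\<lambda>n. norm (x n + y n)) \<longlonglongrightarrow> 2"
  shows "(\<lambda>n. norm (x n - y n)) \<longlonglongrightarrow> 0"
proof -
  have "(\<lambda>n. norm (x n + y n) / 2) \<longlonglongrightarrow> 2 / 2"
    using assms(4) by (rule tendsto_divide) simp_all
  then have "(\<lambda>n. norm ((x n + y n) /\<^sub>R 2)) \<longlonglongrightarrow> 1"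
    unfolding norm_scaleR by simp
  moreover have "\<forall>n. x n \<in> unit_sphere \<and> y n \<in> unit_sphere" using assms(2,3) by simp
  ultimately show ?thesis using assms(1) unfolding uniformly_rotund_def by blast
qed

lemma uniformly_rotund_modulus:
  assumes "uniformly_rotund TYPE('a::real_normed_vector)" "0 < e"
  shows "\<exists>d>0. \<forall>x y::'a. norm x = 1 \<longrightarrow> norm y = 1 \<longrightarrow> 2 - d \<le> norm (x + y) \<longrightarrow> norm (x - y) \<le> e"
proof (rule ccontr)
  assume contra: "\<not> ?thesis"
  have "\<forall>n. \<exists>x y::'a. norm x = 1 \<and> norm y = 1 \<and> 2 - inverse (Suc n) \<le> norm (x + y) \<and> e < norm (x - y)"
  proof
    fix n
    have "0 < inverse (real (Suc n))" by simp
    with contra have "\<not> (\<forall>x y::'a. norm x = 1 \<longrightarrow> norm y = 1 \<longrightarrow>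
                        2 - inverse (Suc n) \<le> norm (x + y) \<longrightarrow> norm (x - y) \<le> e)"
      by blast
    then show "\<exists>x y::'a. norm x = 1 \<and> norm y = 1 \<and> 2 - inverse (Suc n) \<le> norm (x + y) \<and> e < norm (x - y)"
      by (auto simp: not_le)
  qed
  from choice[OF this] obtain x :: "nat \<Rightarrow> 'a" where "\<forall>n. \<exists>y::'a. norm (x n) = 1 \<and> norm y = 1 \<and>
      2 - inverse (Suc n) \<le> norm (x n + y) \<and> e < norm (x n - y)" ..
  from choice[OF this] obtain y :: "nat \<Rightarrow> 'a" where xy: "\<forall>n. norm (x n) = 1 \<and> norm (y n) = 1 \<and>
      2 - inverse (Suc n) \<le> norm (x n + y n) \<and> e < norm (x n - y n)" ..
  have "(\<lambda>n. norm (x n + y n)) \<longlonglongrightarrow> 2"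
  proof (rule tendsto_sandwich)
    show "\<forall>\<^sub>F n in sequentially. 2 - inverse (Suc n) \<le> norm (x n + y n)"
      using xy by (intro always_eventually) blast
    show "\<forall>\<^sub>F n in sequentially. norm (x n + y n) \<le> 2"
    proof (rule always_eventually, rule allI)
      fix n show "norm (x n + y n) \<le> 2" using norm_triangle_ineq[of "x n" "y n"] xy by simp
    qed
    show "(\<lambda>n. 2 - inverse (Suc n)) \<longlonglongrightarrow> (2::real)"
      using tendsto_diff[OF tendsto_const LIMSEQ_inverse_real_of_nat] by simp
  qed simp
  with assms(1) xy have "(\<lambda>n. norm (x n - y n)) \<longlonglongrightarrow> 0"
    by (intro uniformly_rotundD) simp_all
  then have "\<forall>\<^sub>F n in sequentially. norm (x n - y n) < e"
    using \<open>0 < e\<close> by (rule order_tendstoD)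
  then obtain n where "norm (x n - y n) < e"
    using eventually_happens'[OF trivial_limit_sequentially] by blast
  with xy show False by (meson not_less_iff_gr_or_eq)
qed

lemma uniformly_strongly_chebyshev_unit_sphereD:
  fixes x :: "'a::real_normed_vector"
  assumes "uniformly_strongly_chebyshev unit_sphere (UNIV - unit_ball :: 'a set)" "1 < norm x"
  shows "metric_proj unit_sphere x = {x /\<^sub>R norm x}"
proof -
  have "x \<in> UNIV - unit_ball" using assms(2) by simp
  then obtain p where "metric_proj unit_sphere x = {p}"
    using assms(1) unfolding uniformly_strongly_chebyshev_def by blast
  with radial_mem_metric_proj_unit_sphere[of x] assms(2) show ?thesis by auto
qed

lemma uniformly_strongly_chebyshev_iff_UN_cball:
  "uniformly_strongly_chebyshev A D \<longleftrightarrow>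
     (\<forall>x\<in>D. \<exists>p. metric_proj A x = {p}) \<and>
     (\<forall>e>0. \<exists>d>0. \<forall>x\<in>D. approx_proj A x d \<subseteq> (\<Union>p\<in>metric_proj A x. cball p e))"
  unfolding uniformly_strongly_chebyshev_def by (simp only: thickening_eq_UN_cball cong: imp_cong)

lemma uniformly_strongly_chebyshev_unit_sphere_iff:
  "uniformly_strongly_chebyshev unit_sphere (UNIV - unit_ball :: 'a::real_normed_vector set) \<longleftrightarrow>
     (\<forall>e>0. \<exists>d>0. \<forall>x::'a\<in>UNIV - unit_ball. approx_proj unit_sphere x d \<subseteq> cball (x /\<^sub>R norm x) e)"
  (is "?usc \<longleftrightarrow> ?local")
proof
  assume ?usc
  then have "metric_proj unit_sphere x = {x /\<^sub>R norm x}" if "1 < norm x" for x :: 'a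
    using that by (rule uniformly_strongly_chebyshev_unit_sphereD)
  with \<open>?usc\<close> show ?local
    unfolding uniformly_strongly_chebyshev_iff_UN_cball by simp
next
  assume local: ?local
  have "metric_proj unit_sphere x \<subseteq> {x /\<^sub>R norm x}" if "1 < norm x" for x :: 'a
  proof
    fix y assume y: "y \<in> metric_proj unit_sphere x"
    have "dist (x /\<^sub>R norm x) y \<le> 0 + e" if "0 < e" for e
    proof -
      obtain d where "0 < d"
        and d: "\<forall>x::'a\<in>UNIV - unit_ball. approx_proj unit_sphere x d \<subseteq> cball (x /\<^sub>R norm x) e"
        using local \<open>0 < e\<close> by blast
      have "y \<in> approx_proj unit_sphere x d"
        using y approx_proj_mono[of 0 d] \<open>0 < d\<close> unfolding metric_proj_def by auto
      moreover have "approx_proj unit_sphere x d \<subseteq> cball (x /\<^sub>R norm x) e"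
        using d \<open>1 < norm x\<close> by simp
      ultimately show ?thesis by auto
    qed
    then have "dist (x /\<^sub>R norm x) y \<le> 0" by (rule field_le_epsilon)
    then show "y \<in> {x /\<^sub>R norm x}" by simp
  qed
  then have "metric_proj unit_sphere x = {x /\<^sub>R norm x}" if "1 < norm x" for x :: 'a
    using that radial_mem_metric_proj_unit_sphere[of x] by auto
  with local show ?usc
    unfolding uniformly_strongly_chebyshev_iff_UN_cball by simp
qed

lemma norm_diff_unit_sphere_le:
  "a \<in> unit_sphere \<Longrightarrow> b \<in> unit_sphere \<Longrightarrow> norm (a - b) \<le> 2"
  using norm_triangle_ineq4[of a b] by simp

lemma approx_proj_unit_sphere_subset_cball:
  fixes x :: "'a::real_normed_vector"
  assumes "1 \<le> norm x"
  shows "approx_proj unit_sphere x \<delta> \<subseteq> cball (x /\<^sub>R norm x) 2"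
proof
  fix y assume "y \<in> approx_proj unit_sphere x \<delta>"
  then have "y \<in> unit_sphere" using approx_proj_subset by blast
  moreover have "x \<noteq> 0" using assms by auto
  then have "x /\<^sub>R norm x \<in> unit_sphere" by simp
  ultimately have "norm (x /\<^sub>R norm x - y) \<le> 2" by (intro norm_diff_unit_sphere_le)
  then show "y \<in> cball (x /\<^sub>R norm x) 2" by (simp add: dist_norm)
qed

lemma abs_rad_diff_le:
  fixes A B :: "'a::real_normed_vector set"
  assumes A: "A \<subseteq> cball u r" and B: "B \<subseteq> cball v r" and "u \<in> A" "v \<in> B"
  shows "\<bar>rad A B - norm (u - v)\<bar> \<le> 2 * r"
proof -
  have "0 \<le> r" using A \<open>u \<in> A\<close> by auto
  have "bounded A" "bounded B"
    using bounded_subset[OF bounded_cball A] bounded_subset[OF bounded_cball B] .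
  then have lower: "norm (u - v) \<le> rad A B"
    using \<open>u \<in> A\<close> \<open>v \<in> B\<close> by (rule norm_diff_le_rad)
  have upper: "rad A B \<le> norm (u - v) + 2 * r"
  proof (rule rad_le)
    show "A \<noteq> {}" "B \<noteq> {}" using \<open>u \<in> A\<close> \<open>v \<in> B\<close> by auto
    fix a b assume "a \<in> A" "b \<in> B"
    with A B have "dist u a \<le> r" "dist v b \<le> r" by auto
    moreover have "dist a b \<le> dist u a + dist u v + dist v b" by metric
    ultimately show "norm (a - b) \<le> norm (u - v) + 2 * r"
      unfolding dist_norm by linarith
  qed
  from lower upper \<open>0 \<le> r\<close> show ?thesis
    unfolding abs_le_iff by linarith
qed

lemma diameter_le_of_subset_cball:
  fixes A :: "'a::real_normed_vector set"
  assumes "A \<subseteq> cball u r" "0 \<le> r"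
  shows "diameter A \<le> 2 * r"
proof (rule diameter_le)
  fix x y assume "x \<in> A" "y \<in> A"
  with assms(1) have "dist u x \<le> r" "dist u y \<le> r" by auto
  moreover have "dist x y \<le> dist u x + dist u y" by metric
  ultimately show "norm (x - y) \<le> 2 * r" by (simp add: dist_norm)
qed (use assms(2) in simp)

lemma diameter_approx_proj_unit_sphere_le: "diameter (approx_proj unit_sphere x \<delta>) \<le> 2"
proof -
  have "approx_proj unit_sphere x \<delta> \<subseteq> cball 0 1"
    using approx_proj_subset by fastforce
  then show ?thesis using diameter_le_of_subset_cball[of _ 0 1] by simp
qed

lemma norm_diff_le_diameter_approx_proj_unit_sphere:
  fixes x y :: "'a::real_normed_vector"
  assumes "norm x = 1" "norm y = 1" "1 \<le> norm (x + y)" "2 - \<delta> \<le> norm (x + y)"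
  shows "norm (x - y) \<le> diameter (approx_proj unit_sphere (x + y) \<delta>)"
proof -
  have "x \<in> approx_proj unit_sphere (x + y) \<delta>"
    using assms by (rule mem_approx_proj_unit_sphere_add)
  moreover have "y \<in> approx_proj unit_sphere (x + y) \<delta>"
    using mem_approx_proj_unit_sphere_add[of y x] assms by (simp add: add.commute)
  ultimately show ?thesis
    using diameter_bounded_bound[OF bounded_approx_proj_unit_sphere] by (simp add: dist_norm)
qed

lemma uniformly_strongly_chebyshev_unit_sphere_iff_sequentially:
  "uniformly_strongly_chebyshev unit_sphere (UNIV - unit_ball :: 'a::real_normed_vector set) \<longleftrightarrow>
     (\<forall>e>0. \<forall>\<^sub>F n in sequentially. \<forall>x::'a\<in>UNIV - unit_ball.
        approx_proj unit_sphere x (1 / real n) \<subseteq> cball (x /\<^sub>R norm x) e)"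
  unfolding uniformly_strongly_chebyshev_unit_sphere_iff
proof (intro iffI allI impI)
  fix e :: real
  assume "\<forall>e>0. \<exists>d>0. \<forall>x::'a\<in>UNIV - unit_ball. approx_proj unit_sphere x d \<subseteq> cball (x /\<^sub>R norm x) e"
    and "0 < e"
  then obtain d where "0 < d"
    and d: "\<forall>x::'a\<in>UNIV - unit_ball. approx_proj unit_sphere x d \<subseteq> cball (x /\<^sub>R norm x) e"
    by blast
  from order_tendstoD(2)[OF lim_1_over_n \<open>0 < d\<close>]
  show "\<forall>\<^sub>F n in sequentially. \<forall>x::'a\<in>UNIV - unit_ball.
          approx_proj unit_sphere x (1 / real n) \<subseteq> cball (x /\<^sub>R norm x) e"
  proof (rule eventually_mono)
    fix n assume "1 / real n < d"
    show "\<forall>x::'a\<in>UNIV - unit_ball. approx_proj unit_sphere x (1 / real n) \<subseteq> cball (x /\<^sub>R norm x) e"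
    proof
      fix x :: 'a assume "x \<in> UNIV - unit_ball"
      with d have "approx_proj unit_sphere x d \<subseteq> cball (x /\<^sub>R norm x) e" ..
      moreover have "approx_proj unit_sphere x (1 / real n) \<subseteq> approx_proj unit_sphere x d"
        using \<open>1 / real n < d\<close> by (intro approx_proj_mono) simp
      ultimately show "approx_proj unit_sphere x (1 / real n) \<subseteq> cball (x /\<^sub>R norm x) e" by blast
    qed
  qed
next
  fix e :: real
  assume "\<forall>e>0. \<forall>\<^sub>F n in sequentially. \<forall>x::'a\<in>UNIV - unit_ball.
            approx_proj unit_sphere x (1 / real n) \<subseteq> cball (x /\<^sub>R norm x) e"
    and "0 < e"
  then have "\<forall>\<^sub>F n in sequentially. 0 < n \<and> (\<forall>x::'a\<in>UNIV - unit_ball.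
               approx_proj unit_sphere x (1 / real n) \<subseteq> cball (x /\<^sub>R norm x) e)"
    using eventually_gt_at_top eventually_conj by blast
  then obtain n :: nat where "0 < n"
    and "\<forall>x::'a\<in>UNIV - unit_ball. approx_proj unit_sphere x (1 / real n) \<subseteq> cball (x /\<^sub>R norm x) e"
    using eventually_happens'[OF trivial_limit_sequentially] by blast
  then show "\<exists>d>0. \<forall>x::'a\<in>UNIV - unit_ball. approx_proj unit_sphere x d \<subseteq> cball (x /\<^sub>R norm x) e"
    by (intro exI[of _ "1 / real n"]) simp
qed

lemma uniformly_rotund_imp_uniformly_strongly_chebyshev:
  assumes "uniformly_rotund TYPE('a::real_normed_vector)"
  shows "uniformly_strongly_chebyshev unit_sphere (UNIV - unit_ball :: 'a set)"
  unfolding uniformly_strongly_chebyshev_unit_sphere_iff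
proof (intro allI impI)
  fix e :: real assume "0 < e"
  then obtain d where "0 < d" and d:
    "\<forall>x y::'a. norm x = 1 \<longrightarrow> norm y = 1 \<longrightarrow> 2 - d \<le> norm (x + y) \<longrightarrow> norm (x - y) \<le> e"
    using uniformly_rotund_modulus[OF assms] by blast
  have "\<forall>x::'a\<in>UNIV - unit_ball. approx_proj unit_sphere x d \<subseteq> cball (x /\<^sub>R norm x) e"
  proof (intro ballI subsetI)
    fix x y :: 'a assume "x \<in> UNIV - unit_ball" and y: "y \<in> approx_proj unit_sphere x d"
    then have "1 < norm x" by simp
    then have "x \<noteq> 0" by auto
    then have "norm (x /\<^sub>R norm x) = 1" by simp
    moreover have "norm y = 1" using y \<open>1 < norm x\<close> by (simp add: approx_proj_unit_sphere_iff)
    moreover have "2 - d \<le> norm (x /\<^sub>R norm x + y)"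
      using norm_add_radial_ge[OF less_imp_le[OF \<open>1 < norm x\<close>] y] .
    ultimately show "y \<in> cball (x /\<^sub>R norm x) e" using d by (simp add: dist_norm)
  qed
  with \<open>0 < d\<close> show "\<exists>d>0. \<forall>x::'a\<in>UNIV - unit_ball. approx_proj unit_sphere x d \<subseteq> cball (x /\<^sub>R norm x) e"
    by blast
qed

lemma uniformly_strongly_chebyshev_imp_diameter_approx_proj:
  assumes "uniformly_strongly_chebyshev unit_sphere (UNIV - unit_ball :: 'a::real_normed_vector set)"
    and "0 < e"
  shows "\<forall>\<^sub>F n in sequentially. \<forall>x::'a\<in>UNIV - unit_ball. diameter (approx_proj unit_sphere x (1 / real n)) \<le> e"
proof -
  have "\<forall>\<^sub>F n in sequentially. \<forall>x::'a\<in>UNIV - unit_ball.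
          approx_proj unit_sphere x (1 / real n) \<subseteq> cball (x /\<^sub>R norm x) (e / 2)"
    using assms(1)[unfolded uniformly_strongly_chebyshev_unit_sphere_iff_sequentially, rule_format, of "e / 2"]
      assms(2) by simp
  then show ?thesis
  proof (rule eventually_mono)
    fix n
    assume close: "\<forall>x::'a\<in>UNIV - unit_ball.
                     approx_proj unit_sphere x (1 / real n) \<subseteq> cball (x /\<^sub>R norm x) (e / 2)"
    show "\<forall>x::'a\<in>UNIV - unit_ball. diameter (approx_proj unit_sphere x (1 / real n)) \<le> e"
    proof
      fix x :: 'a assume "x \<in> UNIV - unit_ball"
      with close have "approx_proj unit_sphere x (1 / real n) \<subseteq> cball (x /\<^sub>R norm x) (e / 2)" ..
      then have "diameter (approx_proj unit_sphere x (1 / real n)) \<le> 2 * (e / 2)"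
        by (rule diameter_le_of_subset_cball) (use \<open>0 < e\<close> in simp)
      then show "diameter (approx_proj unit_sphere x (1 / real n)) \<le> e" by simp
    qed
  qed
qed

lemma diameter_approx_proj_imp_uniformly_rotund:
  assumes "\<And>e. 0 < e \<Longrightarrow> \<forall>\<^sub>F n in sequentially. \<forall>x::'a\<in>UNIV - unit_ball.
             diameter (approx_proj unit_sphere x (1 / real n)) \<le> e"
  shows "uniformly_rotund TYPE('a::real_normed_vector)"
  unfolding uniformly_rotund_def
proof (intro allI impI)
  fix x y :: "nat \<Rightarrow> 'a"
  assume "\<forall>n. x n \<in> unit_sphere \<and> y n \<in> unit_sphere"
    and mid: "(\<lambda>n. norm ((x n + y n) /\<^sub>R 2)) \<longlonglongrightarrow> 1"
  then have unit: "norm (x n) = 1" "norm (y n) = 1" for n by simp_all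
  show "(\<lambda>n. norm (x n - y n)) \<longlonglongrightarrow> 0"
  proof (rule tendstoI)
    fix e :: real assume "0 < e"
    then have "\<forall>\<^sub>F m in sequentially. 0 < m \<and> (\<forall>p::'a\<in>UNIV - unit_ball.
                 diameter (approx_proj unit_sphere p (1 / real m)) \<le> e / 2)"
      using eventually_conj[OF eventually_gt_at_top[of 0] assms[OF half_gt_zero[OF \<open>0 < e\<close>]]] by simp
    then obtain m :: nat where "0 < m"
      and diam: "\<forall>p::'a\<in>UNIV - unit_ball. diameter (approx_proj unit_sphere p (1 / real m)) \<le> e / 2"
      using eventually_happens'[OF trivial_limit_sequentially] by blast
    have "1 - 1 / (2 * real m) < 1" using \<open>0 < m\<close> by simp
    from order_tendstoD(1)[OF mid this]
    show "\<forall>\<^sub>F n in sequentially. dist (norm (x n - y n)) 0 < e"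
    proof (rule eventually_mono)
      fix n assume "1 - 1 / (2 * real m) < norm ((x n + y n) /\<^sub>R 2)"
      then have big: "2 - 1 / real m < norm (x n + y n)"
        unfolding norm_scaleR by (simp add: field_simps)
      moreover have "1 / real m \<le> 1" using \<open>0 < m\<close> by simp
      ultimately have "1 < norm (x n + y n)" by linarith
      with big unit have "norm (x n - y n) \<le> diameter (approx_proj unit_sphere (x n + y n) (1 / real m))"
        by (intro norm_diff_le_diameter_approx_proj_unit_sphere) simp_all
      also have "\<dots> \<le> e / 2"
        using diam \<open>1 < norm (x n + y n)\<close> by simp
      finally show "dist (norm (x n - y n)) 0 < e" using \<open>0 < e\<close> by simp
    qed
  qed
qed

lemma uniformly_strongly_chebyshev_imp_rad_approx_proj:
  assumes "uniformly_strongly_chebyshev unit_sphere (UNIV - unit_ball :: 'a::real_normed_vector set)"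
    and "0 < e"
  shows "\<forall>\<^sub>F n in sequentially. \<forall>x::'a\<in>UNIV - unit_ball. \<forall>x'::'a\<in>UNIV - unit_ball.
           \<bar>rad (approx_proj unit_sphere x (1 / real n)) (approx_proj unit_sphere x' (1 / real n))
             - norm (x /\<^sub>R norm x - x' /\<^sub>R norm x')\<bar> \<le> e"
proof -
  have "\<forall>\<^sub>F n in sequentially. \<forall>x::'a\<in>UNIV - unit_ball.
          approx_proj unit_sphere x (1 / real n) \<subseteq> cball (x /\<^sub>R norm x) (e / 2)"
    using assms(1)[unfolded uniformly_strongly_chebyshev_unit_sphere_iff_sequentially, rule_format, of "e / 2"]
      assms(2) by simp
  then show ?thesis
  proof (rule eventually_mono)
    fix n
    assume close: "\<forall>x::'a\<in>UNIV - unit_ball. approx_proj unit_sphere x (1 / real n) \<subseteq> cball (x /\<^sub>R norm x) (e / 2)"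
    show "\<forall>x::'a\<in>UNIV - unit_ball. \<forall>x'::'a\<in>UNIV - unit_ball.
           \<bar>rad (approx_proj unit_sphere x (1 / real n)) (approx_proj unit_sphere x' (1 / real n))
             - norm (x /\<^sub>R norm x - x' /\<^sub>R norm x')\<bar> \<le> e"
    proof (intro ballI)
      fix x x' :: 'a assume x: "x \<in> UNIV - unit_ball" and x': "x' \<in> UNIV - unit_ball"
      then have "1 \<le> norm x" "1 \<le> norm x'" by simp_all
      then have "x /\<^sub>R norm x \<in> approx_proj unit_sphere x (1 / real n)"
        "x' /\<^sub>R norm x' \<in> approx_proj unit_sphere x' (1 / real n)"
        by (simp_all add: radial_mem_approx_proj_unit_sphere)
      with close x x' have "\<bar>rad (approx_proj unit_sphere x (1 / real n)) (approx_proj unit_sphere x' (1 / real n))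
             - norm (x /\<^sub>R norm x - x' /\<^sub>R norm x')\<bar> \<le> 2 * (e / 2)"
        by (intro abs_rad_diff_le) blast+
      then show "\<bar>rad (approx_proj unit_sphere x (1 / real n)) (approx_proj unit_sphere x' (1 / real n))
             - norm (x /\<^sub>R norm x - x' /\<^sub>R norm x')\<bar> \<le> e" by simp
    qed
  qed
qed

lemma rad_approx_proj_imp_diameter_approx_proj:
  assumes "\<forall>\<^sub>F n in sequentially. \<forall>x::'a::real_normed_vector\<in>UNIV - unit_ball. \<forall>x'\<in>UNIV - unit_ball.
             \<bar>rad (approx_proj unit_sphere x (1 / real n)) (approx_proj unit_sphere x' (1 / real n))
               - norm (x /\<^sub>R norm x - x' /\<^sub>R norm x')\<bar> \<le> e"
  shows "\<forall>\<^sub>F n in sequentially. \<forall>x::'a\<in>UNIV - unit_ball. diameter (approx_proj unit_sphere x (1 / real n)) \<le> e"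
  using assms
proof (rule eventually_mono)
  fix n
  assume dev: "\<forall>x::'a\<in>UNIV - unit_ball. \<forall>x'\<in>UNIV - unit_ball.
                 \<bar>rad (approx_proj unit_sphere x (1 / real n)) (approx_proj unit_sphere x' (1 / real n))
                   - norm (x /\<^sub>R norm x - x' /\<^sub>R norm x')\<bar> \<le> e"
  show "\<forall>x::'a\<in>UNIV - unit_ball. diameter (approx_proj unit_sphere x (1 / real n)) \<le> e"
  proof
    fix x :: 'a assume "x \<in> UNIV - unit_ball"
    with dev have "\<bar>rad (approx_proj unit_sphere x (1 / real n)) (approx_proj unit_sphere x (1 / real n))
                     - norm (x /\<^sub>R norm x - x /\<^sub>R norm x)\<bar> \<le> e"
      by blast
    then have "\<bar>rad (approx_proj unit_sphere x (1 / real n)) (approx_proj unit_sphere x (1 / real n))\<bar> \<le> e"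
      by simp
    moreover have "approx_proj unit_sphere x (1 / real n) \<noteq> {}"
      using radial_mem_approx_proj_unit_sphere[of x "1 / real n"] \<open>x \<in> UNIV - unit_ball\<close> by auto
    ultimately show "diameter (approx_proj unit_sphere x (1 / real n)) \<le> e"
      by (simp add: diameter_eq_rad)
  qed
qed

lemma uniformly_rotund_iff_uniformly_strongly_chebyshev:
  "uniformly_rotund TYPE('a::real_normed_vector) \<longleftrightarrow>
     uniformly_strongly_chebyshev unit_sphere (UNIV - unit_ball :: 'a set)"
proof
  assume "uniformly_strongly_chebyshev unit_sphere (UNIV - unit_ball :: 'a set)"
  then show "uniformly_rotund TYPE('a)"
    by (intro diameter_approx_proj_imp_uniformly_rotund uniformly_strongly_chebyshev_imp_diameter_approx_proj)
qed (rule uniformly_rotund_imp_uniformly_strongly_chebyshev)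

lemma uniformly_rotund_iff_diameter_approx_proj:
  assumes "\<exists>x::'a::real_normed_vector. x \<noteq> 0"
  shows "uniformly_rotund TYPE('a) \<longleftrightarrow>
           (\<lambda>n. SUP x\<in>(UNIV - unit_ball :: 'a set). diameter (approx_proj unit_sphere x (1 / real n))) \<longlonglongrightarrow> 0"
proof -
  have "(\<lambda>n. SUP x\<in>(UNIV - unit_ball :: 'a set). diameter (approx_proj unit_sphere x (1 / real n))) \<longlonglongrightarrow> 0 \<longleftrightarrow>
        (\<forall>e>0. \<forall>\<^sub>F n in sequentially. \<forall>x::'a\<in>UNIV - unit_ball.
           diameter (approx_proj unit_sphere x (1 / real n)) \<le> e)"
    using outside_unit_ball_nonempty[OF assms]
    by (intro tendsto_SUP_0_iff_uniformly[where B = 2])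
      (simp_all add: diameter_ge_0 bounded_approx_proj_unit_sphere diameter_approx_proj_unit_sphere_le)
  also have "\<dots> \<longleftrightarrow> uniformly_rotund TYPE('a)"
  proof
    assume "uniformly_rotund TYPE('a)"
    then show "\<forall>e>0. \<forall>\<^sub>F n in sequentially. \<forall>x::'a\<in>UNIV - unit_ball.
                 diameter (approx_proj unit_sphere x (1 / real n)) \<le> e"
      by (simp add: uniformly_rotund_imp_uniformly_strongly_chebyshev
          uniformly_strongly_chebyshev_imp_diameter_approx_proj)
  qed (simp add: diameter_approx_proj_imp_uniformly_rotund)
  finally show ?thesis ..
qed

lemma uniformly_rotund_iff_rad_approx_proj:
  assumes "\<exists>x::'a::real_normed_vector. x \<noteq> 0"
  shows "uniformly_rotund TYPE('a) \<longleftrightarrow>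
           (\<lambda>n. SUP (x, x')\<in>(UNIV - unit_ball :: 'a set) \<times> (UNIV - unit_ball).
              \<bar>rad (approx_proj unit_sphere x (1 / real n)) (approx_proj unit_sphere x' (1 / real n))
                - norm (x /\<^sub>R norm x - x' /\<^sub>R norm x')\<bar>) \<longlonglongrightarrow> 0"
    (is "_ \<longleftrightarrow> (\<lambda>n. SUP p\<in>?X \<times> ?X. ?dev n p) \<longlonglongrightarrow> 0")
proof -
  have dev_le: "?dev n p \<le> 2 * 2" if "p \<in> ?X \<times> ?X" for n p
  proof -
    obtain x x' where p: "p = (x, x')" by (cases p)
    with that have "1 \<le> norm x" "1 \<le> norm x'" by auto
    then show ?thesis unfolding p prod.case
      by (intro abs_rad_diff_le approx_proj_unit_sphere_subset_cball radial_mem_approx_proj_unit_sphere)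
        simp_all
  qed
  have "(\<lambda>n. SUP p\<in>?X \<times> ?X. ?dev n p) \<longlonglongrightarrow> 0 \<longleftrightarrow>
        (\<forall>e>0. \<forall>\<^sub>F n in sequentially. \<forall>p\<in>?X \<times> ?X. ?dev n p \<le> e)"
    using outside_unit_ball_nonempty[OF assms] by (intro tendsto_SUP_0_iff_uniformly[where B = "2 * 2"] dev_le) auto
  also have "\<dots> \<longleftrightarrow> (\<forall>e>0. \<forall>\<^sub>F n in sequentially. \<forall>x\<in>?X. \<forall>x'\<in>?X.
           \<bar>rad (approx_proj unit_sphere x (1 / real n)) (approx_proj unit_sphere x' (1 / real n))
             - norm (x /\<^sub>R norm x - x' /\<^sub>R norm x')\<bar> \<le> e)"
    by (simp only: split_paired_Ball_Sigma prod.case)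
  also have "\<dots> \<longleftrightarrow> uniformly_rotund TYPE('a)"
    using uniformly_strongly_chebyshev_imp_rad_approx_proj[OF uniformly_rotund_imp_uniformly_strongly_chebyshev]
      diameter_approx_proj_imp_uniformly_rotund[OF rad_approx_proj_imp_diameter_approx_proj]
    by blast
  finally show ?thesis ..
qed

lemma uniformly_strongly_chebyshev_unit_sphere_iff_hausdorff:
  assumes "\<exists>x::'a::real_normed_vector. x \<noteq> 0"
  shows "uniformly_strongly_chebyshev unit_sphere (UNIV - unit_ball :: 'a set) \<longleftrightarrow>
           (\<forall>x::'a\<in>UNIV - unit_ball. metric_proj unit_sphere x = {x /\<^sub>R norm x}) \<and>
           (\<lambda>n. SUP x\<in>(UNIV - unit_ball :: 'a set).
              hausdorff (approx_proj unit_sphere x (1 / real n)) (metric_proj unit_sphere x)) \<longlonglongrightarrow> 0"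
    (is "?usc \<longleftrightarrow> ?single \<and> ?lim")
proof -
  let ?h = "\<lambda>n x. hausdorff (approx_proj unit_sphere x (1 / real n)) {x /\<^sub>R norm x}"
  have h_le_iff: "?h n x \<le> e \<longleftrightarrow> approx_proj unit_sphere x (1 / real n) \<subseteq> cball (x /\<^sub>R norm x) e"
    if "1 < norm x" for n e and x :: 'a
    using that by (intro hausdorff_approx_proj_unit_sphere) simp_all
  have h_nonneg: "0 \<le> ?h n x" if "1 < norm x" for n and x :: 'a
    using that by (intro hausdorff_approx_proj_unit_sphere(1)) simp_all
  have h_le_2: "?h n x \<le> 2" if "1 < norm x" for n and x :: 'a
    unfolding h_le_iff[OF that] using that by (intro approx_proj_unit_sphere_subset_cball) simp
  have "(\<lambda>n. SUP x\<in>(UNIV - unit_ball :: 'a set). ?h n x) \<longlonglongrightarrow> 0 \<longleftrightarrow>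
        (\<forall>e>0. \<forall>\<^sub>F n in sequentially. \<forall>x::'a\<in>UNIV - unit_ball. ?h n x \<le> e)"
    using outside_unit_ball_nonempty[OF assms] h_nonneg h_le_2
    by (intro tendsto_SUP_0_iff_uniformly[where B = 2]) auto
  also have "\<dots> \<longleftrightarrow> ?usc"
    unfolding uniformly_strongly_chebyshev_unit_sphere_iff_sequentially using h_le_iff by simp
  finally have h_iff: "(\<lambda>n. SUP x\<in>(UNIV - unit_ball :: 'a set). ?h n x) \<longlonglongrightarrow> 0 \<longleftrightarrow> ?usc" .
  have SUP_eq: "?single \<Longrightarrow> (\<lambda>n. SUP x\<in>(UNIV - unit_ball :: 'a set).
          hausdorff (approx_proj unit_sphere x (1 / real n)) (metric_proj unit_sphere x)) =
        (\<lambda>n. SUP x\<in>(UNIV - unit_ball :: 'a set). ?h n x)"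
    by (intro ext SUP_cong) auto
  have single: ?single if ?usc
  proof
    fix x :: 'a assume "x \<in> UNIV - unit_ball"
    then show "metric_proj unit_sphere x = {x /\<^sub>R norm x}"
      using uniformly_strongly_chebyshev_unit_sphereD[OF that] by simp
  qed
  show ?thesis
  proof
    assume ?usc
    with single h_iff SUP_eq show "?single \<and> ?lim" by simp
  next
    assume "?single \<and> ?lim"
    then have ?single ?lim by blast+
    with SUP_eq have "(\<lambda>n. SUP x\<in>(UNIV - unit_ball :: 'a set). ?h n x) \<longlonglongrightarrow> 0" by simp
    with h_iff show ?usc by blast
  qed
qed

theorem corollary3p10:
  fixes X1 :: "'a::banach set"
  assumes nontrivial: "\<exists>x::'a. x \<noteq> 0"
    and X1_def: "X1 = UNIV - unit_ball"
  shows "(uniformly_rotund TYPE('a) \<longleftrightarrow>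
           (\<lambda>n. SUP (x, x')\<in>X1 \<times> X1.
              \<bar>rad (approx_proj unit_sphere x (1 / real n)) (approx_proj unit_sphere x' (1 / real n))
                - norm (x /\<^sub>R norm x - x' /\<^sub>R norm x')\<bar>) \<longlonglongrightarrow> 0)
       \<and> (uniformly_rotund TYPE('a) \<longleftrightarrow>
           (\<lambda>n. SUP x\<in>X1. diameter (approx_proj unit_sphere x (1 / real n))) \<longlonglongrightarrow> 0)
       \<and> (uniformly_rotund TYPE('a) \<longleftrightarrow>
           (\<forall>x\<in>X1. metric_proj unit_sphere x = {x /\<^sub>R norm x}) \<and>
           (\<lambda>n. SUP x\<in>X1. hausdorff (approx_proj unit_sphere x (1 / real n)) (metric_proj unit_sphere x))
              \<longlonglongrightarrow> 0)
       \<and> (uniformly_rotund TYPE('a) \<longleftrightarrow> uniformly_strongly_chebyshev unit_sphere X1)"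
  unfolding X1_def
  by (intro conjI uniformly_rotund_iff_rad_approx_proj[OF nontrivial]
      uniformly_rotund_iff_diameter_approx_proj[OF nontrivial]
      uniformly_rotund_iff_uniformly_strongly_chebyshev
      trans[OF uniformly_rotund_iff_uniformly_strongly_chebyshev
        uniformly_strongly_chebyshev_unit_sphere_iff_hausdorff[OF nontrivial]])

end
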